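(* For every integer $k\ge1$, \[ \sum_{n=1}^\infty\frac{P_k(H_n,H_n^{(2)},\dots,H_n^{(k)})}{(n+2)^2}=\sum_{j=2}^{k+2}\zeta(j)-(k+1). \]
   Context: $H_n^{(r)}=\sum_{t=1}^n t^{-r}$, $H_n=H_n^{(1)}$. For $n\ge1$, $P_n(y_1,\dots,y_n)=\sum_{m_1+2m_2+\cdots=n}\frac{(-1)^{m_2+m_4+\cdots}}{m_1!m_2!\cdots}\prod_{i\ge1}(y_i/i)^{m_i}$ (sum over tuples of nonnegative integers), so that $P_k(H_n,\dots,H_n^{(k)})=\sum_{1\le n_1<\cdots<n_k\le n}\frac{1}{n_1\cdots n_k}$. $\zeta$ is the Riemann zeta function. *)

theory Defs
  imports "HOL-Analysis.Analysis"
begin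

definition gen_harm :: "nat \<Rightarrow> nat \<Rightarrow> real" where
  "gen_harm r n = (\<Sum>t=1..n. 1 / (real t) ^ r)"

definition partition_tuples :: "nat \<Rightarrow> (nat \<Rightarrow> nat) set" where
  "partition_tuples n = {m. (\<forall>i. i \<notin> {1..n} \<longrightarrow> m i = 0) \<and> (\<Sum>i=1..n. i * m i) = n}"

definition P_poly :: "nat \<Rightarrow> (nat \<Rightarrow> real) \<Rightarrow> real" where
  "P_poly n y = (\<Sum>m\<in>partition_tuples n.
      (-1) ^ (\<Sum>i\<in>{i\<in>{1..n}. even i}. m i) / (\<Prod>i=1..n. fact (m i))
      * (\<Prod>i=1..n. (y i / real i) ^ (m i)))"

text \<open>Riemann zeta at integer arguments s >= 2 (where the series converges).\<close>
definition zeta_int :: "nat \<Rightarrow> real" where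
  "zeta_int s = (\<Sum>n. 1 / (real (Suc n)) ^ s)"

end

theory Submission
  imports Defs "HOL-Real_Asymp.Real_Asymp"
begin

text \<open>By Newton's identities, \<open>P\<^sub>k(H\<^sub>n, \<dots>, H\<^sub>n\<^sup>(\<^sup>k\<^sup>))\<close> is the elementary symmetric
  function \<open>e\<^sub>k(n)\<close> of \<open>1, 1/2, \<dots>, 1/n\<close>, which satisfies
  \<open>e\<^sub>k(n+1) = e\<^sub>k(n) + e\<^sub>k\<^sub>-\<^sub>1(n)/(n+1)\<close>.
  Everything else is telescoping along this recursion.
  Expanding \<open>1/(n+1)\<^sup>2 = \<Sum>\<^sub>m n! m!/(n+m+2)!\<close> and telescoping \<open>e\<^sub>k(n) n! m!/(n+m+1)!\<close> in \<open>n\<close>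
  gives \<open>\<Sum>\<^sub>n e\<^sub>k(n) n! m!/(n+m+2)! = 1/(m+1)\<^sup>k\<^sup>+\<^sup>2\<close>, hence
  \<open>\<Sum>\<^sub>n e\<^sub>k(n)/(n+1)\<^sup>2 = \<zeta>(k+2)\<close> after swapping the double sum.
  Telescoping \<open>e\<^sub>k(n)/(n+1)\<close> gives \<open>\<Sum>\<^sub>n e\<^sub>k(n)/((n+1)(n+2)) = 1\<close>, and telescoping
  \<open>e\<^sub>k(n)/(n+1)\<^sup>2\<close> then shows that \<open>T\<^sub>k = \<Sum>\<^sub>n e\<^sub>k(n)/(n+2)\<^sup>2\<close> satisfies
  \<open>T\<^sub>k = T\<^sub>k\<^sub>-\<^sub>1 + \<zeta>(k+2) - 1\<close>, with \<open>T\<^sub>0 = \<zeta>(2) - 1\<close>.\<close>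

lemma telescope_sums_scaled:
  fixes G f g :: "nat \<Rightarrow> 'a :: real_normed_field"
  assumes "G \<longlonglongrightarrow> 0" and "\<And>n. G n - G (Suc n) = c * f n - g n"
    and "g sums S" and "c \<noteq> 0"
  shows "f sums ((G 0 + S) / c)"
proof -
  have "(\<lambda>n. (G n - G (Suc n)) + g n) sums (G 0 - 0 + S)"
    by (intro sums_add telescope_sums' assms)
  then have "(\<lambda>n. c * f n / c) sums ((G 0 + S) / c)"
    unfolding assms(2) by (intro sums_divide) simp
  then show ?thesis
    using assms(4) by simp
qed

lemma sums_swap_nonneg:
  fixes f :: "nat \<Rightarrow> nat \<Rightarrow> real"
  assumes nonneg: "\<And>n m. f n m \<ge> 0"
    and rows: "\<And>m. (\<lambda>n. f n m) sums g m" and "g sums S"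
    and cols: "\<And>n. (\<lambda>m. f n m) sums h n"
  shows "h sums S"
proof -
  define F where "F p = f (snd p) (fst p)" for p
  have rows': "((\<lambda>n. F (m, n)) has_sum g m) UNIV" for m
    using rows nonneg by (simp add: F_def sums_nonneg_imp_has_sum)
  have "g m \<ge> 0" for m
    by (rule sums_le[OF nonneg sums_zero rows])
  then have g: "(g has_sum S) UNIV"
    using \<open>g sums S\<close> by (rule_tac sums_nonneg_imp_has_sum)
  have "F summable_on UNIV \<times> UNIV"
    by (rule summable_on_SigmaI[OF rows']) (use g nonneg in \<open>auto simp: F_def summable_on_def\<close>)
  with rows' g have "(F has_sum S) (UNIV \<times> UNIV)"
    by (rule has_sum_SigmaI)
  then have "((\<lambda>(n, m). F (m, n)) has_sum S) (UNIV \<times> UNIV)"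
    by (subst (asm) has_sum_swap)
  moreover have "((\<lambda>m. (\<lambda>(n, m). F (m, n)) (n, m)) has_sum h n) UNIV" for n
    using cols nonneg by (simp add: F_def sums_nonneg_imp_has_sum)
  ultimately show ?thesis
    by (intro has_sum_imp_sums has_sum_SigmaD[where g = h])
qed

lemma zeta_int_sums: "s \<ge> 2 \<Longrightarrow> (\<lambda>m. 1 / real (Suc m) ^ s) sums zeta_int s"
proof -
  assume "s \<ge> 2"
  then have "summable (\<lambda>m. inverse (real (Suc m) ^ s))"
    by (subst summable_Suc_iff) (rule inverse_power_summable)
  then show ?thesis
    unfolding zeta_int_def by (simp add: summable_sums flip: inverse_eq_divide)
qed

lemma harm_le_1_plus_ln: "harm n \<le> 1 + ln (real n + 1)"
proof -
  have "harm (Suc n) - ln (real (Suc n)) \<le> harm (Suc 0) - ln (real (Suc 0))"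
    using decseq_harm_diff_ln unfolding decseq_def by (metis le0)
  then have "harm (Suc n) \<le> 1 + ln (real n + 1)"
    by (simp add: harm_def add.commute)
  moreover have "harm n \<le> (harm (Suc n) :: real)"
    by (rule harm_mono) simp
  ultimately show ?thesis
    by linarith
qed

text \<open>\<open>esym_harm k n\<close> is the elementary symmetric function \<open>e\<^sub>k(1, 1/2, \<dots>, 1/n)\<close>.\<close>

fun esym_harm :: "nat \<Rightarrow> nat \<Rightarrow> real" where
  "esym_harm 0 n = 1"
| "esym_harm (Suc k) 0 = 0"
| "esym_harm (Suc k) (Suc n) = esym_harm (Suc k) n + esym_harm k n / real (Suc n)"

definition esym_harm_prev :: "nat \<Rightarrow> nat \<Rightarrow> real" where
  "esym_harm_prev k n = (if k = 0 then 0 else esym_harm (k - 1) n)"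

lemma esym_harm_prev_0 [simp]: "esym_harm_prev 0 n = 0"
  and esym_harm_prev_Suc [simp]: "esym_harm_prev (Suc k) n = esym_harm k n"
  by (simp_all add: esym_harm_prev_def)

lemma esym_harm_Suc: "esym_harm k (Suc n) = esym_harm k n + esym_harm_prev k n / real (Suc n)"
  by (cases k) simp_all

lemma esym_harm_nonneg: "esym_harm k n \<ge> 0"
  by (induction k n rule: esym_harm.induct) auto

lemma esym_harm_le_harm_power: "esym_harm k n \<le> harm n ^ k"
proof (induction k n rule: esym_harm.induct)
  case (2 k)
  then show ?case by (simp add: harm_def)
next
  case (3 k n)
  have "esym_harm (Suc k) (Suc n) \<le> harm n ^ Suc k + harm n ^ k / real (Suc n)"
    using 3 by (simp add: divide_right_mono add_mono)
  also have "\<dots> = (harm n + 1 / real (Suc n)) * harm n ^ k"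
    by (simp add: algebra_simps)
  also have "\<dots> \<le> (harm n + 1 / real (Suc n)) ^ Suc k"
    by (simp add: harm_nonneg mult_left_mono power_mono)
  finally show ?case
    by (simp add: harm_Suc inverse_eq_divide)
qed simp

lemma esym_harm_div_tendsto_0: "(\<lambda>n. esym_harm k n / real (Suc n)) \<longlonglongrightarrow> 0"
proof -
  define z where "z n = 1 + ln (real n + 1)" for n
  have "filterlim z at_top sequentially"
    unfolding z_def by real_asymp
  from filterlim_compose[OF tendsto_power_div_exp_0 this]
  have "(\<lambda>n. z n ^ k / exp (z n)) \<longlonglongrightarrow> 0"
    by simp
  then have lim: "(\<lambda>n. exp 1 * (z n ^ k / exp (z n))) \<longlonglongrightarrow> 0"
    by (rule tendsto_mult_right_zero)
  have bound: "esym_harm k n / real (Suc n) \<le> exp 1 * (z n ^ k / exp (z n))" for n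
  proof -
    have "esym_harm k n \<le> z n ^ k"
      using esym_harm_le_harm_power[of k n] power_mono[OF harm_le_1_plus_ln harm_nonneg, of n k]
      unfolding z_def by linarith
    then have "esym_harm k n / real (Suc n) \<le> z n ^ k / real (Suc n)"
      by (simp add: divide_right_mono del: of_nat_Suc)
    also have "\<dots> = exp 1 * (z n ^ k / exp (z n))"
      by (simp add: z_def exp_add add.commute)
    finally show ?thesis .
  qed
  show ?thesis
  proof (rule tendsto_sandwich[OF _ _ tendsto_const lim])
    show "\<forall>\<^sub>F n in sequentially. 0 \<le> esym_harm k n / real (Suc n)"
      by (intro always_eventually allI divide_nonneg_nonneg esym_harm_nonneg) simp
    show "\<forall>\<^sub>F n in sequentially. esym_harm k n / real (Suc n) \<le> exp 1 * (z n ^ k / exp (z n))"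
      by (intro always_eventually allI bound)
  qed
qed

lemma esym_harm_div_square_tendsto_0: "(\<lambda>n. esym_harm k n / real (Suc n) ^ 2) \<longlonglongrightarrow> 0"
proof (rule tendsto_sandwich[OF _ _ tendsto_const esym_harm_div_tendsto_0])
  have "real (Suc n) \<le> real (Suc n) ^ 2" for n
    by (simp add: power2_eq_square)
  then show "\<forall>\<^sub>F n in sequentially. esym_harm k n / real (Suc n) ^ 2 \<le> esym_harm k n / real (Suc n)"
    by (intro always_eventually allI divide_left_mono esym_harm_nonneg) auto
qed (simp add: esym_harm_nonneg)

text \<open>\<open>beta_nat n m = B(n+1, m+1)\<close>, Euler's Beta function at positive integers.\<close>

definition beta_nat :: "nat \<Rightarrow> nat \<Rightarrow> real" where
  "beta_nat n m = fact n * fact m / fact (n + m + 1)"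

definition beta_nat2 :: "nat \<Rightarrow> nat \<Rightarrow> real" where
  "beta_nat2 n m = fact n * fact m / fact (n + m + 2)"

lemma beta_nat_nonneg: "beta_nat n m \<ge> 0" and beta_nat2_nonneg: "beta_nat2 n m \<ge> 0"
  by (simp_all add: beta_nat_def beta_nat2_def)

lemma beta_nat_commute: "beta_nat n m = beta_nat m n"
  unfolding beta_nat_def by (simp add: ac_simps)

lemma beta_nat_0_right [simp]: "beta_nat n 0 = 1 / real (Suc n)"
  and beta_nat_0_left [simp]: "beta_nat 0 m = 1 / real (Suc m)"
  by (simp_all add: beta_nat_def)

lemma beta_nat_le: "beta_nat n m \<le> 1 / real (Suc m)"
proof -
  have "fact (Suc m) * fact n \<le> (fact (Suc m + n) :: nat)"
    by (intro dvd_imp_le fact_fact_dvd_fact) simp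
  then have "real (fact (Suc m) * fact n) \<le> real (fact (Suc m + n))"
    by (simp only: of_nat_le_iff)
  then have "(fact (Suc m) * fact n :: real) \<le> fact (n + m + 1)"
    by (simp only: of_nat_mult of_nat_fact) (simp add: add.commute)
  then have "real (Suc m) * fact m * fact n \<le> (fact (n + m + 1) :: real)"
    by (simp only: fact_Suc)
  then show ?thesis
    unfolding beta_nat_def by (simp add: field_simps del: of_nat_Suc)
qed

lemma beta_nat_eq: "beta_nat n m = real (n + m + 2) * beta_nat2 n m"
proof -
  have "fact (n + m + 2) = real (n + m + 2) * (fact (n + m + 1) :: real)"
    using fact_Suc[of "n + m + 1", where 'a = real] by (simp add: numeral_2_eq_2)
  then show ?thesis
    unfolding beta_nat_def beta_nat2_def by simp
qed

lemma beta_nat_Suc_left: "beta_nat (Suc n) m = real (Suc n) * beta_nat2 n m"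
  unfolding beta_nat_def beta_nat2_def by simp

lemma beta_nat_Suc_right: "beta_nat n (Suc m) = real (Suc m) * beta_nat2 n m"
  unfolding beta_nat_def beta_nat2_def by (simp add: ac_simps)

lemma beta_nat_tendsto_0: "beta_nat n \<longlonglongrightarrow> 0"
  by (rule tendsto_sandwich[OF _ _ tendsto_const LIMSEQ_inverse_real_of_nat])
     (simp_all add: beta_nat_nonneg beta_nat_le inverse_eq_divide del: of_nat_Suc)

lemma beta_nat_diff_Suc_left: "beta_nat n m - beta_nat (Suc n) m = real (Suc m) * beta_nat2 n m"
  unfolding beta_nat_eq[of n m] beta_nat_Suc_left by (simp add: algebra_simps)

lemma sums_beta_nat2: "(\<lambda>m. beta_nat2 n m) sums (1 / real (Suc n) ^ 2)"
proof -
  have diff: "beta_nat n m - beta_nat n (Suc m) = real (Suc n) * beta_nat2 n m - 0" for m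
    unfolding beta_nat_eq[of n m] beta_nat_Suc_right by (simp add: algebra_simps)
  have "(\<lambda>m. beta_nat2 n m) sums ((beta_nat n 0 + 0) / real (Suc n))"
    by (rule telescope_sums_scaled[OF beta_nat_tendsto_0 _ sums_zero], rule diff) simp
  then show ?thesis
    by (simp add: power2_eq_square)
qed

lemma sums_esym_harm_beta_nat2:
  "(\<lambda>n. esym_harm k n * beta_nat2 n m) sums (1 / real (Suc m) ^ (k + 2))"
proof -
  have step: "(\<lambda>n. esym_harm k n * beta_nat2 n m)
      sums ((esym_harm k 0 / real (Suc m) + S) / real (Suc m))"
    if prev: "(\<lambda>n. esym_harm_prev k n * beta_nat2 n m) sums S" for k S
  proof -
    define G where "G n = esym_harm k n * beta_nat n m" for n
    have G_lim: "G \<longlonglongrightarrow> 0"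
    proof (rule tendsto_sandwich[OF _ _ tendsto_const esym_harm_div_tendsto_0])
      show "\<forall>\<^sub>F n in sequentially. G n \<le> esym_harm k n / real (Suc n)"
        using mult_left_mono[OF beta_nat_le esym_harm_nonneg]
        by (simp add: G_def beta_nat_commute[of _ m] del: of_nat_Suc)
    qed (simp add: G_def beta_nat_nonneg esym_harm_nonneg)
    have diff: "G n - G (Suc n) = real (Suc m) * (esym_harm k n * beta_nat2 n m)
        - esym_harm_prev k n * beta_nat2 n m" for n
    proof -
      have "G n - G (Suc n) = esym_harm k n * (beta_nat n m - beta_nat (Suc n) m)
          - esym_harm_prev k n / real (Suc n) * beta_nat (Suc n) m"
        unfolding G_def esym_harm_Suc by (simp add: algebra_simps)
      then show ?thesis
        unfolding beta_nat_diff_Suc_left by (simp add: beta_nat_Suc_left)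
    qed
    have "(\<lambda>n. esym_harm k n * beta_nat2 n m) sums ((G 0 + S) / real (Suc m))"
      by (rule telescope_sums_scaled[OF G_lim _ prev], rule diff) simp
    then show ?thesis
      by (simp add: G_def)
  qed
  show ?thesis
  proof (induction k)
    case 0
    show ?case
      using step[of 0 0] by (simp add: power2_eq_square)
  next
    case (Suc k)
    have "(\<lambda>n. esym_harm (Suc k) n * beta_nat2 n m)
        sums ((esym_harm (Suc k) 0 / real (Suc m) + 1 / real (Suc m) ^ (k + 2)) / real (Suc m))"
      by (rule step) (simp only: esym_harm_prev_Suc Suc.IH)
    then show ?case
      by (simp add: power_Suc2 ac_simps del: of_nat_Suc)
  qed
qed

lemma sums_esym_harm_div_square:
  "(\<lambda>n. esym_harm k n / real (Suc n) ^ 2) sums zeta_int (k + 2)"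
proof (rule sums_swap_nonneg)
  show "(\<lambda>n. esym_harm k n * beta_nat2 n m) sums (1 / real (Suc m) ^ (k + 2))" for m
    by (rule sums_esym_harm_beta_nat2)
  show "(\<lambda>m. 1 / real (Suc m) ^ (k + 2)) sums zeta_int (k + 2)"
    by (rule zeta_int_sums) simp
  show "(\<lambda>m. esym_harm k n * beta_nat2 n m) sums (esym_harm k n / real (Suc n) ^ 2)" for n
    using sums_mult[OF sums_beta_nat2[of n], of "esym_harm k n"] by simp
qed (simp add: esym_harm_nonneg beta_nat2_nonneg)

lemma sums_esym_harm_div_consecutive:
  "(\<lambda>n. esym_harm k n / (real (Suc n) * real (Suc (Suc n)))) sums 1"
proof -
  have step: "(\<lambda>n. esym_harm k n / (real (Suc n) * real (Suc (Suc n)))) sums (esym_harm k 0 + S)"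
    if prev: "(\<lambda>n. esym_harm_prev k n / (real (Suc n) * real (Suc (Suc n)))) sums S" for k S
  proof -
    have diff: "esym_harm k n / real (Suc n) - esym_harm k (Suc n) / real (Suc (Suc n))
        = 1 * (esym_harm k n / (real (Suc n) * real (Suc (Suc n))))
          - esym_harm_prev k n / (real (Suc n) * real (Suc (Suc n)))" for n
    proof -
      have key: "a / x - (a + b / x) / y = 1 * (a / (x * y)) - b / (x * y)"
        if "x \<noteq> 0" "y \<noteq> 0" "y = x + 1" for a b x y :: real
      proof -
        have "a / x - (a + b / x) / y = (a * y - a * x - b) / (x * y)"
          using that(1,2) by (simp add: field_simps)
        then show ?thesis
          using that(3) by (simp add: algebra_simps diff_divide_distrib)
      qed
      show ?thesis
        unfolding esym_harm_Suc by (rule key) simp_all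
    qed
    have "(\<lambda>n. esym_harm k n / (real (Suc n) * real (Suc (Suc n))))
        sums ((esym_harm k 0 / real (Suc 0) + S) / 1)"
      by (rule telescope_sums_scaled[OF esym_harm_div_tendsto_0 _ prev], rule diff) simp
    then show ?thesis
      by simp
  qed
  show ?thesis
  proof (induction k)
    case 0
    show ?case
      using step[of 0 0] by simp
  next
    case (Suc k)
    then show ?case
      using step[of "Suc k"] by simp
  qed
qed

lemma sums_esym_harm_div_shifted_square:
  "(\<lambda>n. esym_harm k n / real (Suc (Suc n)) ^ 2)
     sums ((\<Sum>j=2..k+2. zeta_int j) - (real k + 1))"
proof (induction k)
  case 0
  have "(\<lambda>m. 1 / real (Suc m) ^ 2) sums (zeta_int 2 - 1 + 1 / real (Suc 0) ^ 2)"
    using zeta_int_sums[of 2] by simp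
  then have "(\<lambda>m. 1 / real (Suc (Suc m)) ^ 2) sums (zeta_int 2 - 1)"
    by (subst sums_Suc_iff)
  then show ?case
    by (simp add: numeral_2_eq_2)
next
  case (Suc k)
  define A where "A n = esym_harm k n / (real (Suc n) * real (Suc (Suc n)))" for n
  define F where "F n = esym_harm (Suc k) n / real (Suc n) ^ 2" for n
  define T where "T n = esym_harm k n / real (Suc (Suc n)) ^ 2" for n
  have diff: "F n - F (Suc n)
      = (-1) * (esym_harm (Suc k) n / real (Suc (Suc n)) ^ 2) - (A n - F n - T n)" for n
  proof -
    have key: "a / x\<^sup>2 - (a + b / x) / y\<^sup>2
        = (-1) * (a / y\<^sup>2) - (b / (x * y) - a / x\<^sup>2 - b / y\<^sup>2)"
      if "x \<noteq> 0" "y \<noteq> 0" "y = x + 1" for a b x y :: real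
    proof -
      have "b / (x * y) - b / y\<^sup>2 = (b * y - b * x) / (x * y\<^sup>2)"
        using that(1,2) by (simp add: field_simps power2_eq_square)
      also have "b * y - b * x = b"
        using that(3) by (simp add: algebra_simps)
      finally show ?thesis
        using that(1,2) by (simp add: add_divide_distrib)
    qed
    show ?thesis
      unfolding A_def F_def T_def esym_harm_Suc[of "Suc k"] esym_harm_prev_Suc
      by (rule key) simp_all
  qed
  define Z where "Z = (\<Sum>j=2..k+2. zeta_int j)"
  have AFT: "(\<lambda>n. A n - F n - T n) sums (1 - zeta_int (k + 3) - (Z - (real k + 1)))"
    unfolding A_def F_def T_def Z_def using sums_esym_harm_div_consecutive
      sums_esym_harm_div_square[of "Suc k"] Suc.IH
    by (intro sums_diff) (simp_all add: numeral_3_eq_3)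
  have "(\<lambda>n. esym_harm (Suc k) n / real (Suc (Suc n)) ^ 2)
      sums ((F 0 + (1 - zeta_int (k + 3) - (Z - (real k + 1)))) / - 1)"
    by (rule telescope_sums_scaled[OF esym_harm_div_square_tendsto_0[of "Suc k", folded F_def] _ AFT],
        rule diff) simp
  moreover have "(\<Sum>j=2..Suc k+2. zeta_int j) = Z + zeta_int (k + 3)"
    unfolding Z_def by (simp add: numeral_3_eq_3)
  ultimately show ?case
    by (simp add: F_def algebra_simps)
qed

lemma gen_harm_0 [simp]: "gen_harm i 0 = 0"
  by (simp add: gen_harm_def)

lemma gen_harm_Suc: "gen_harm i (Suc n) = gen_harm i n + 1 / real (Suc n) ^ i"
  by (simp add: gen_harm_def)

lemma alternating_sum_esym_harm_Suc:
  fixes n :: nat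
  defines "x \<equiv> 1 / real (Suc n)"
  shows "(\<Sum>i=1..Suc k. (-1)^(i+1) * x^i * esym_harm (Suc k - i) (Suc n)) = x * esym_harm k n"
proof (induction k)
  case (Suc k)
  define f where "f i = (-1::real)^(i+1) * x^i * esym_harm (Suc (Suc k) - i) (Suc n)" for i
  have "(\<Sum>i=1..Suc (Suc k). f i) = f 1 + (\<Sum>i=Suc 1..Suc (Suc k). f i)"
    by (rule sum.atLeast_Suc_atMost) simp
  also have "(\<Sum>i=Suc 1..Suc (Suc k). f i) = (\<Sum>i=1..Suc k. f (Suc i))"
    by (rule sum.shift_bounds_cl_Suc_ivl)
  also have "\<dots>
      = - x * (\<Sum>i=1..Suc k. (-1)^(i+1) * x^i * esym_harm (Suc k - i) (Suc n))"
    unfolding sum_distrib_left by (rule sum.cong) (auto simp: f_def)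
  also have "\<dots> = - x * (x * esym_harm k n)"
    by (simp only: Suc.IH)
  also have "f 1 = x * esym_harm (Suc k) n + x * (x * esym_harm k n)"
    unfolding f_def esym_harm_Suc by (simp add: x_def algebra_simps)
  finally show ?case
    by (simp add: f_def)
qed simp

lemma newton_esym_harm:
  "real k * esym_harm k n = (\<Sum>i=1..k. (-1)^(i+1) * gen_harm i n * esym_harm (k - i) n)"
proof (induction n arbitrary: k)
  case 0
  show ?case
    by (cases k) simp_all
next
  case (Suc n)
  show ?case
  proof (cases k)
    case (Suc j)
    define x where "x = 1 / real (Suc n)"
    define s where "s i = (-1::real)^(i+1)" for i
    have "s i * gen_harm i (Suc n) * esym_harm (k - i) (Suc n)
        = s i * gen_harm i n * esym_harm (k - i) n
          + x * (s i * gen_harm i n * esym_harm_prev (k - i) n)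
          + s i * x^i * esym_harm (k - i) (Suc n)" for i
      unfolding gen_harm_Suc esym_harm_Suc[of _ n] x_def
      by (simp add: algebra_simps power_divide)
    then have "(\<Sum>i=1..k. s i * gen_harm i (Suc n) * esym_harm (k - i) (Suc n))
        = (\<Sum>i=1..k. s i * gen_harm i n * esym_harm (k - i) n)
          + x * (\<Sum>i=1..k. s i * gen_harm i n * esym_harm_prev (k - i) n)
          + (\<Sum>i=1..k. s i * x^i * esym_harm (k - i) (Suc n))"
      by (simp add: sum.distrib sum_distrib_left)
    also have "(\<Sum>i=1..k. s i * gen_harm i n * esym_harm_prev (k - i) n)
        = (\<Sum>i=1..j. s i * gen_harm i n * esym_harm (j - i) n)"
      unfolding Suc by (simp add: Suc_diff_le)
    also have "(\<Sum>i=1..k. s i * x^i * esym_harm (k - i) (Suc n)) = x * esym_harm j n"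
      unfolding Suc s_def x_def by (rule alternating_sum_esym_harm_Suc)
    \<comment> \<open>By induction the three sums are \<open>k e\<^sub>k(n)\<close>, \<open>(k-1) e\<^sub>k\<^sub>-\<^sub>1(n)\<close> and \<open>e\<^sub>k\<^sub>-\<^sub>1(n)/(n+1)\<close>.\<close>
    finally show ?thesis
      unfolding s_def Suc.IH[symmetric] by (simp add: Suc x_def algebra_simps add_divide_distrib)
  qed simp
qed

definition P_coeff :: "(nat \<Rightarrow> real) \<Rightarrow> nat \<Rightarrow> real" where
  "P_coeff y i = (-1)^(i+1) * (y i / real i)"

definition P_term :: "(nat \<Rightarrow> real) \<Rightarrow> nat \<Rightarrow> (nat \<Rightarrow> nat) \<Rightarrow> real" where
  "P_term y N m = (\<Prod>i=1..N. P_coeff y i ^ m i / fact (m i))"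

lemma P_poly_eq_sum_P_term: "P_poly n y = (\<Sum>m\<in>partition_tuples n. P_term y n m)"
  unfolding P_poly_def
proof (rule sum.cong[OF refl])
  fix m
  have "(-1::real) ^ (\<Sum>i\<in>{i\<in>{1..n}. even i}. m i) = (\<Prod>i\<in>{i\<in>{1..n}. even i}. (-1) ^ m i)"
    by (rule power_sum)
  also have "\<dots> = (\<Prod>i=1..n. if even i then (-1) ^ m i else 1)"
    by (rule prod.inter_filter) simp
  also have "\<dots> = (\<Prod>i=1..n. ((-1)^(i+1)) ^ m i)"
    by (rule prod.cong) auto
  finally have sign: "(-1::real) ^ (\<Sum>i\<in>{i\<in>{1..n}. even i}. m i) = (\<Prod>i=1..n. ((-1)^(i+1)) ^ m i)" .
  show "(-1) ^ (\<Sum>i\<in>{i\<in>{1..n}. even i}. m i) / (\<Prod>i=1..n. fact (m i))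
      * (\<Prod>i=1..n. (y i / real i) ^ m i) = P_term y n m"
    unfolding P_term_def P_coeff_def power_mult_distrib sign
    by (simp add: prod_dividef prod.distrib)
qed

lemma finite_partition_tuples: "finite (partition_tuples n)"
proof (rule finite_subset)
  show "partition_tuples n \<subseteq> {m. \<forall>i. (i \<in> {1..n} \<longrightarrow> m i \<in> {0..n}) \<and> (i \<notin> {1..n} \<longrightarrow> m i = 0)}"
  proof safe
    fix m i assume m: "m \<in> partition_tuples n" and i: "i \<in> {1..n}"
    have "m i \<le> i * m i"
      using i by simp
    also have "\<dots> \<le> (\<Sum>i=1..n. i * m i)"
      by (rule member_le_sum) (use i in auto)
    finally show "m i \<in> {0..n}"
      using m by (simp add: partition_tuples_def)
  qed (simp add: partition_tuples_def)
  show "finite {m. \<forall>i. (i \<in> {1..n} \<longrightarrow> m i \<in> {0..n}) \<and> (i \<notin> {1..n} \<longrightarrow> (m i :: nat) = 0)}"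
    by (rule finite_set_of_finite_funs) simp_all
qed

lemma mem_partition_tuples_iff:
  assumes "n \<le> N"
  shows "m \<in> partition_tuples n \<longleftrightarrow> (\<forall>i. i \<notin> {1..N} \<longrightarrow> m i = 0) \<and> (\<Sum>i=1..N. i * m i) = n"
proof
  assume "m \<in> partition_tuples n"
  then have supp: "\<forall>i. i \<notin> {1..n} \<longrightarrow> m i = 0" and "(\<Sum>i=1..n. i * m i) = n"
    by (auto simp: partition_tuples_def)
  moreover have "(\<Sum>i=1..N. i * m i) = (\<Sum>i=1..n. i * m i)"
    by (rule sum.mono_neutral_right) (use supp assms in auto)
  ultimately show "(\<forall>i. i \<notin> {1..N} \<longrightarrow> m i = 0) \<and> (\<Sum>i=1..N. i * m i) = n"
    using assms by auto
next
  assume supp: "(\<forall>i. i \<notin> {1..N} \<longrightarrow> m i = 0) \<and> (\<Sum>i=1..N. i * m i) = n"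
  have "m i = 0" if "i \<notin> {1..n}" for i
  proof (cases "i \<in> {1..N}")
    case True
    have "i * m i \<le> n"
      using supp member_le_sum[of i "{1..N}" "\<lambda>i. i * m i"] True by simp
    then show ?thesis
      using that True by (cases "m i") auto
  qed (use supp in auto)
  moreover have "(\<Sum>i=1..N. i * m i) = (\<Sum>i=1..n. i * m i)"
    by (rule sum.mono_neutral_right) (use calculation assms in auto)
  ultimately show "m \<in> partition_tuples n"
    using supp by (simp add: partition_tuples_def)
qed

lemma sum_weight_fun_upd:
  assumes "finite A" and "i \<in> A"
  shows "(\<Sum>j\<in>A. j * (m(i := v)) j) + i * m i = (\<Sum>j\<in>A. j * m j) + i * (v :: nat)"
proof -
  have "(\<Sum>j\<in>A - {i}. j * (m(i := v)) j) = (\<Sum>j\<in>A - {i}. j * m j)"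
    by (rule sum.cong) auto
  then show ?thesis
    unfolding sum.remove[OF assms, of "\<lambda>j. j * (m(i := v)) j"] sum.remove[OF assms, of "\<lambda>j. j * m j"]
    by simp
qed

lemma partition_tuples_remove_part:
  assumes i: "i \<in> {1..k}" and m: "m \<in> partition_tuples k" and "m i \<noteq> 0"
  shows "m(i := m i - 1) \<in> partition_tuples (k - i)"
proof -
  have supp: "\<forall>j. j \<notin> {1..k} \<longrightarrow> m j = 0" and wt: "(\<Sum>j=1..k. j * m j) = k"
    using m by (auto simp: partition_tuples_def)
  have "(\<Sum>j=1..k. j * (m(i := m i - 1)) j) + i * m i = k + i * (m i - 1)"
    using sum_weight_fun_upd[of "{1..k}" i m "m i - 1"] i wt by simp
  moreover have "i * (m i - 1) + i = i * m i"
    using \<open>m i \<noteq> 0\<close> by (cases "m i") auto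
  ultimately have "(\<Sum>j=1..k. j * (m(i := m i - 1)) j) = k - i"
    by linarith
  then show ?thesis
    using supp i by (subst mem_partition_tuples_iff[of _ k]) auto
qed

lemma partition_tuples_add_part:
  assumes i: "i \<in> {1..k}" and m: "m \<in> partition_tuples (k - i)"
  shows "m(i := Suc (m i)) \<in> partition_tuples k"
proof -
  have supp: "\<forall>j. j \<notin> {1..k} \<longrightarrow> m j = 0" and wt: "(\<Sum>j=1..k. j * m j) = k - i"
    using m mem_partition_tuples_iff[of "k - i" k] by auto
  have "(\<Sum>j=1..k. j * (m(i := Suc (m i))) j) + i * m i = (k - i) + i * Suc (m i)"
    using sum_weight_fun_upd[of "{1..k}" i m "Suc (m i)"] i wt by simp
  then have "(\<Sum>j=1..k. j * (m(i := Suc (m i))) j) = k"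
    using i by simp
  then show ?thesis
    using supp i by (subst mem_partition_tuples_iff[of _ k]) auto
qed

lemma P_term_restrict:
  assumes "\<forall>i. i \<notin> {1..n} \<longrightarrow> m i = 0" and "n \<le> N"
  shows "P_term y N m = P_term y n m"
  unfolding P_term_def by (rule prod.mono_neutral_right) (use assms in auto)

lemma P_term_Suc_part:
  assumes "i \<in> {1..N}"
  shows "real (Suc t) * P_term y N (m(i := Suc t)) = P_coeff y i * P_term y N (m(i := t))"
proof -
  have split: "P_term y N (m(i := v))
      = P_coeff y i ^ v / fact v * (\<Prod>j\<in>{1..N} - {i}. P_coeff y j ^ m j / fact (m j))" for v
  proof -
    have "(\<Prod>j\<in>{1..N} - {i}. P_coeff y j ^ (m(i := v)) j / fact ((m(i := v)) j))
        = (\<Prod>j\<in>{1..N} - {i}. P_coeff y j ^ m j / fact (m j))"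
      by (rule prod.cong) auto
    then show ?thesis
      unfolding P_term_def prod.remove[OF finite_atLeastAtMost assms] by simp
  qed
  have "real (Suc t) * (P_coeff y i ^ Suc t / fact (Suc t)) = P_coeff y i * (P_coeff y i ^ t / fact t)"
    unfolding fact_Suc[of t] power_Suc by (simp add: field_simps del: of_nat_Suc fact_Suc)
  then show ?thesis
    unfolding split by (simp add: mult.assoc)
qed

lemma sum_part_P_term:
  assumes i: "i \<in> {1..k}"
  shows "(\<Sum>m\<in>partition_tuples k. real (i * m i) * P_term y k m)
    = (-1)^(i+1) * y i * P_poly (k - i) y"
proof -
  have "(\<Sum>m\<in>partition_tuples k. real (i * m i) * P_term y k m)
      = (\<Sum>m\<in>{m \<in> partition_tuples k. m i \<noteq> 0}. real (i * m i) * P_term y k m)"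
    by (rule sum.mono_neutral_right[OF finite_partition_tuples]) auto
  also have "\<dots> = (\<Sum>m\<in>partition_tuples (k - i). real i * P_coeff y i * P_term y k m)"
  proof (rule sum.reindex_bij_witness[where j = "\<lambda>m. m(i := m i - 1)" and i = "\<lambda>m. m(i := Suc (m i))"])
    fix m assume "m \<in> {m \<in> partition_tuples k. m i \<noteq> 0}"
    then have m: "m \<in> partition_tuples k" "m i \<noteq> 0"
      by simp_all
    then obtain t where t: "m i = Suc t"
      by (cases "m i") auto
    then have "real (Suc t) * P_term y k m = P_coeff y i * P_term y k (m(i := t))"
      using P_term_Suc_part[OF i, of t y m] by (simp add: fun_upd_idem)
    then show "real i * P_coeff y i * P_term y k (m(i := m i - 1)) = real (i * m i) * P_term y k m"
      by (simp only: t diff_Suc_1 of_nat_mult mult.assoc)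
    show "(m(i := m i - 1))(i := Suc ((m(i := m i - 1)) i)) = m"
      using t by auto
    show "m(i := m i - 1) \<in> partition_tuples (k - i)"
      using partition_tuples_remove_part[OF i m] .
  next
    fix m assume m: "m \<in> partition_tuples (k - i)"
    show "(m(i := Suc (m i)))(i := (m(i := Suc (m i))) i - 1) = m"
      by simp
    show "m(i := Suc (m i)) \<in> {m \<in> partition_tuples k. m i \<noteq> 0}"
      using partition_tuples_add_part[OF i m] by simp
  qed
  also have "\<dots> = real i * P_coeff y i * (\<Sum>m\<in>partition_tuples (k - i). P_term y (k - i) m)"
    unfolding sum_distrib_left
  proof (rule sum.cong[OF refl])
    fix m assume "m \<in> partition_tuples (k - i)"
    then have "P_term y k m = P_term y (k - i) m"
      by (intro P_term_restrict) (simp_all add: partition_tuples_def)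
    then show "real i * P_coeff y i * P_term y k m = real i * P_coeff y i * P_term y (k - i) m"
      by simp
  qed
  also have "\<dots> = (-1)^(i+1) * y i * P_poly (k - i) y"
    using i by (simp add: P_poly_eq_sum_P_term P_coeff_def)
  finally show ?thesis .
qed

lemma newton_P_poly:
  "real k * P_poly k y = (\<Sum>i=1..k. (-1)^(i+1) * y i * P_poly (k - i) y)"
proof -
  have "real k * P_poly k y = (\<Sum>m\<in>partition_tuples k. \<Sum>i=1..k. real (i * m i) * P_term y k m)"
    unfolding P_poly_eq_sum_P_term sum_distrib_left
  proof (rule sum.cong[OF refl])
    fix m assume "m \<in> partition_tuples k"
    then have "(\<Sum>i=1..k. i * m i) = k"
      by (simp add: partition_tuples_def)
    then have "real k = (\<Sum>i=1..k. real (i * m i))"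
      by (metis of_nat_sum)
    then show "real k * P_term y k m = (\<Sum>i=1..k. real (i * m i) * P_term y k m)"
      by (simp add: sum_distrib_right)
  qed
  also have "\<dots> = (\<Sum>i=1..k. \<Sum>m\<in>partition_tuples k. real (i * m i) * P_term y k m)"
    by (rule sum.swap)
  also have "\<dots> = (\<Sum>i=1..k. (-1)^(i+1) * y i * P_poly (k - i) y)"
    by (rule sum.cong[OF refl]) (rule sum_part_P_term)
  finally show ?thesis .
qed

lemma P_poly_0 [simp]: "P_poly 0 y = 1"
proof -
  have "partition_tuples 0 = {\<lambda>_. 0}"
    unfolding partition_tuples_def by (auto simp: fun_eq_iff)
  then show ?thesis
    unfolding P_poly_def by simp
qed

lemma P_poly_gen_harm: "P_poly k (\<lambda>i. gen_harm i n) = esym_harm k n"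
proof (induction k rule: less_induct)
  case (less k)
  have "real k * P_poly k (\<lambda>i. gen_harm i n)
      = (\<Sum>i=1..k. (-1)^(i+1) * gen_harm i n * P_poly (k - i) (\<lambda>i. gen_harm i n))"
    by (rule newton_P_poly)
  also have "\<dots> = real k * esym_harm k n"
    unfolding newton_esym_harm by (rule sum.cong[OF refl]) (simp add: less.IH)
  finally show ?case
    by (cases k) simp_all
qed

theorem mainTheorem20:
  fixes k :: nat
  assumes "k \<ge> 1"
  shows "(\<lambda>n. P_poly k (\<lambda>i. gen_harm i (Suc n)) / (real (Suc n) + 2) ^ 2)
           sums ((\<Sum>j=2..k+2. zeta_int j) - (real k + 1))"
proof -
  have "esym_harm k 0 = 0"
    using assms by (cases k) auto
  then have "(\<lambda>n. esym_harm k n / real (Suc (Suc n)) ^ 2)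
      sums ((\<Sum>j=2..k+2. zeta_int j) - (real k + 1) + esym_harm k 0 / real (Suc (Suc 0)) ^ 2)"
    using sums_esym_harm_div_shifted_square by simp
  then have "(\<lambda>n. esym_harm k (Suc n) / real (Suc (Suc (Suc n))) ^ 2)
      sums ((\<Sum>j=2..k+2. zeta_int j) - (real k + 1))"
    by (subst sums_Suc_iff)
  then show ?thesis
    by (simp add: P_poly_gen_harm add_ac)
qed

end
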